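(* In the one-way trading setting with price elasticity, for every $\pi\ge1$, $$\Phi_\Delta(\pi)\ \le\ \bar\Phi(\pi):=\frac{2\Delta}{\pi\left(1+\sqrt{1-1/\pi}\right)}\,(\ln\theta+1),\qquad\theta=M/m.$$
   Context: Fix $\Delta>0$, $0<m\le M$, $\theta=M/m$. Let $\mathcal G_{PE}$ be the set of functions $g(v)=(p-f(v))\,v$ on $[0,\Delta]$, where $p\in[m,M]$ and $f:[0,\Delta]\to[0,\infty)$ is convex and differentiable with $f(0)=0$. An input is a finite sequence $\sigma=(g_1,\dots,g_T)$, $T\ge1$, with $g_t(v)=(p(t)-f_t(v))v\in\mathcal G_{PE}$; $\sigma^{[1:t]}=(g_1,\dots,g_t)$ ($\sigma^{[1:0]}$ empty). $\eta_{OPT}(\sigma^{[1:t]})$ is the optimal value of $\max\sum_{s=1}^t g_s(v_s)$ s.t. $\sum_{s=1}^t v_s\le\Delta$, $v_s\ge0$ (and $0$ for the empty sequence). For $\pi\ge1$, CR-Pursuit($\pi$) outputs at time $t$ the smallest $\bar v_t\in[0,\Delta]$ with $g_t(\bar v_t)=\frac1\pi\big[\eta_{OPT}(\sigma^{[1:t]})-\eta_{OPT}(\sigma^{[1:t-1]})\big]$. $\Phi_\Delta(\pi)$ is the supremum over all such inputs of $\sum_{t=1}^T\bar v_t$. *)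

theory Defs
  imports "HOL-Analysis.Analysis" "HOL-Library.Extended_Real"
begin

text \<open>A function g(v) = (p - f v) v belongs to G_PE (on [0,Delta], with prices in [m,M]).
  An element of G_PE is represented by its pair (p, f).\<close>
definition in_GPE :: "real \<Rightarrow> real \<Rightarrow> real \<Rightarrow> real \<Rightarrow> (real \<Rightarrow> real) \<Rightarrow> bool" where
  "in_GPE Delta m M p f \<longleftrightarrow>
     m \<le> p \<and> p \<le> M \<and> convex_on {0..Delta} f \<and> f differentiable_on {0..Delta} \<and>
     (\<forall>v\<in>{0..Delta}. 0 \<le> f v) \<and> f 0 = 0"

definition gfun :: "real \<times> (real \<Rightarrow> real) \<Rightarrow> real \<Rightarrow> real" where
  "gfun pf v = (fst pf - snd pf v) * v"

text \<open>Offline optimum of a (possibly empty) sequence; the s-th element of the list is g_(s+1).\<close>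
definition etaOPT :: "real \<Rightarrow> (real \<times> (real \<Rightarrow> real)) list \<Rightarrow> real" where
  "etaOPT Delta \<sigma> = Sup {(\<Sum>s<length \<sigma>. gfun (\<sigma> ! s) (x s)) | x.
       (\<forall>s<length \<sigma>. 0 \<le> x s) \<and> (\<Sum>s<length \<sigma>. x s) \<le> Delta}"

text \<open>Output of CR-Pursuit(pi) at time t (1-based, 1 \<le> t \<le> length sigma).\<close>
definition crp_out :: "real \<Rightarrow> real \<Rightarrow> (real \<times> (real \<Rightarrow> real)) list \<Rightarrow> nat \<Rightarrow> real" where
  "crp_out Delta ppi \<sigma> t =
     Inf {v \<in> {0..Delta}. gfun (\<sigma> ! (t - 1)) v =
        (etaOPT Delta (take t \<sigma>) - etaOPT Delta (take (t - 1) \<sigma>)) / ppi}"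

definition Phi :: "real \<Rightarrow> real \<Rightarrow> real \<Rightarrow> real \<Rightarrow> ereal" where
  "Phi Delta m M ppi = (SUP \<sigma> \<in> {\<sigma>. \<sigma> \<noteq> [] \<and> (\<forall>(p, f) \<in> set \<sigma>. in_GPE Delta m M p f)}.
      ereal (\<Sum>t=1..length \<sigma>. crp_out Delta ppi \<sigma> t))"

end

theory Submission
  imports Defs
begin

text \<open>Each gain \<open>g(v) = (p - f v) v\<close> is concave on \<open>[0, \<Delta>]\<close>, which makes the offline optimum a
  submodular function of the set of admitted steps. Hence the increment \<open>\<phi>\<^sub>t\<close> of
  \<open>\<eta>\<^sub>O\<^sub>P\<^sub>T\<close> at step \<open>t\<close> is at most \<open>max g\<^sub>t\<close>, and the increments of all steps with price at most
  \<open>c\<close> add up to at most \<open>c \<Delta>\<close>. Below a maximiser \<open>w\<close>, convexity of \<open>f\<close> bounds \<open>g\<^sub>t\<close> from below by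
  a concave quadratic, whose smaller root at level \<open>\<phi>\<^sub>t / \<pi>\<close> shows that CR-Pursuit sells at
  most \<open>2 \<phi>\<^sub>t / (\<pi> p\<^sub>t (1 + \<surd>(1 - 1/\<pi>)))\<close>. Finally an Abel summation over the prices turns the
  cumulative bound into \<open>\<Sum> \<phi>\<^sub>t / p\<^sub>t \<le> \<Delta> (ln \<theta> + 1)\<close>.\<close>

lemma in_GPE_chord_le:
  assumes "in_GPE D m M p f" "0 \<le> x" "x \<le> y" "y \<le> D" "0 < y"
  shows "f x \<le> x / y * f y"
proof -
  have "convex_on {0..D} f" "f 0 = 0" using assms(1) by (simp_all add: in_GPE_def)
  then have "f ((1 - x / y) *\<^sub>R 0 + (x / y) *\<^sub>R y) \<le> (1 - x / y) * f 0 + x / y * f y"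
    using convex_onD[of "{0..D}" f "x / y" 0 y] assms by auto
  then show ?thesis using assms \<open>f 0 = 0\<close> by simp
qed

lemma in_GPE_mono:
  assumes "in_GPE D m M p f" "0 \<le> x" "x \<le> y" "y \<le> D"
  shows "f x \<le> f y"
proof (cases "y = 0")
  case True
  then show ?thesis using assms by simp
next
  case False
  have "x / y \<le> 1" using assms False by simp
  moreover have "0 \<le> f y" using assms by (auto simp: in_GPE_def)
  ultimately have "x / y * f y \<le> 1 * f y" by (rule mult_right_mono)
  then show ?thesis using in_GPE_chord_le[OF assms] assms False by simp
qed

lemma gfun_concave:
  assumes g: "in_GPE D m M p f" and "x \<in> {0..D}" "y \<in> {0..D}" "0 \<le> l" "l \<le> 1"
  shows "(1 - l) * gfun (p, f) x + l * gfun (p, f) y \<le> gfun (p, f) ((1 - l) * x + l * y)"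
proof -
  define v where "v = (1 - l) * x + l * y"
  have "f v \<le> (1 - l) * f x + l * f y"
    using g assms convex_onD[of "{0..D}" f l x y] by (simp add: in_GPE_def v_def)
  then have "v * f v \<le> v * ((1 - l) * f x + l * f y)"
    using assms by (simp add: v_def mult_left_mono)
  \<comment> \<open>\<open>f\<close> is nondecreasing, so the mixed term \<open>l (1 - l) (x - y) (f x - f y)\<close> is nonnegative.\<close>
  also have "\<dots> = (1 - l) * x * f x + l * y * f y - l * (1 - l) * ((x - y) * (f x - f y))"
    by (simp add: v_def algebra_simps)
  also have "\<dots> \<le> (1 - l) * x * f x + l * y * f y"
  proof -
    have "0 \<le> (x - y) * (f x - f y)"
      using in_GPE_mono[OF g, of x y] in_GPE_mono[OF g, of y x] assms
      by (cases "x \<le> y") (auto simp: mult_nonpos_nonpos)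
    then show ?thesis using assms by simp
  qed
  finally show ?thesis by (simp add: gfun_def v_def algebra_simps)
qed

lemma gfun_mix_sum_le:
  assumes "in_GPE D m M p f" "x \<in> {0..D}" "y \<in> {0..D}" "0 \<le> l" "l \<le> 1"
  shows "gfun (p, f) x + gfun (p, f) y
    \<le> gfun (p, f) ((1 - l) * x + l * y) + gfun (p, f) (l * x + (1 - l) * y)"
proof -
  have "(1 - l) * gfun (p, f) x + l * gfun (p, f) y \<le> gfun (p, f) ((1 - l) * x + l * y)"
    by (rule gfun_concave[OF assms])
  moreover have "l * gfun (p, f) x + (1 - l) * gfun (p, f) y \<le> gfun (p, f) (l * x + (1 - l) * y)"
    using gfun_concave[OF assms(1-3), of "1 - l"] assms(4,5) by simp
  ultimately show ?thesis by (simp add: algebra_simps)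
qed

lemma gfun_le_price:
  assumes "in_GPE D m M p f" "v \<in> {0..D}"
  shows "gfun (p, f) v \<le> p * v"
  using assms by (auto simp: in_GPE_def gfun_def algebra_simps)

lemma continuous_on_gfun:
  assumes "in_GPE D m M p f"
  shows "continuous_on {0..D} (gfun (p, f))"
proof -
  have "continuous_on {0..D} f"
    using assms differentiable_imp_continuous_on by (auto simp: in_GPE_def)
  then show ?thesis unfolding gfun_def by (auto intro!: continuous_intros)
qed

lemma quadratic_level_root:
  fixes p k y ppi :: real
  assumes "0 < p" "0 \<le> k" "0 \<le> y" "1 \<le> ppi" "ppi * (4 * k * y) \<le> p\<^sup>2"
  shows "\<exists>r\<ge>0. p * r - k * r\<^sup>2 = y \<and> r \<le> 2 * y / (p * (1 + sqrt (1 - 1 / ppi)))"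
proof -
  define d where "d = sqrt (p\<^sup>2 - 4 * k * y)"
  have disc: "p\<^sup>2 * (1 - 1 / ppi) \<le> p\<^sup>2 - 4 * k * y"
    using assms by (simp add: algebra_simps le_divide_eq mult.commute)
  have "0 \<le> p\<^sup>2 * (1 - 1 / ppi)" using assms by simp
  then have d2: "d\<^sup>2 = p\<^sup>2 - 4 * k * y" and d0: "0 \<le> d"
    using disc by (simp_all add: d_def)
  have "p * sqrt (1 - 1 / ppi) = sqrt (p\<^sup>2 * (1 - 1 / ppi))"
    using assms by (simp add: real_sqrt_mult)
  also have "\<dots> \<le> d" unfolding d_def using disc by (rule real_sqrt_le_mono)
  finally have p_sqrt_le: "p * sqrt (1 - 1 / ppi) \<le> d" .
  \<comment> \<open>the smaller root \<open>(p - d) / (2 k)\<close>, written so that \<open>k = 0\<close> is allowed\<close>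
  define r where "r = 2 * y / (p + d)"
  have pd: "0 < p + d" using assms d0 by simp
  have r_pd: "r * (p + d) = 2 * y" using pd by (simp add: r_def)
  have "(p * r - k * r\<^sup>2 - y) * (p + d)\<^sup>2
      = p * (r * (p + d)) * (p + d) - k * (r * (p + d))\<^sup>2 - y * (p + d)\<^sup>2"
    by (simp add: power2_eq_square algebra_simps)
  also have "\<dots> = y * (p\<^sup>2 - d\<^sup>2 - 4 * k * y)"
    unfolding r_pd by (simp add: power2_eq_square algebra_simps)
  finally have root: "p * r - k * r\<^sup>2 = y" using d2 pd by simp
  have "0 < p * (1 + sqrt (1 - 1 / ppi))" using assms by (simp add: add_pos_nonneg)
  moreover have "p * (1 + sqrt (1 - 1 / ppi)) \<le> p + d" using p_sqrt_le by (simp add: algebra_simps)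
  ultimately have "r \<le> 2 * y / (p * (1 + sqrt (1 - 1 / ppi)))"
    unfolding r_def using assms pd by (intro divide_left_mono) auto
  moreover have "0 \<le> r" using assms pd by (simp add: r_def)
  ultimately show ?thesis using root by blast
qed

lemma gfun_level_point_le:
  assumes g: "in_GPE D m M p f" and "0 < m" and w: "w \<in> {0..D}"
    and "0 \<le> y" and "1 \<le> ppi" and "ppi * y \<le> gfun (p, f) w"
  shows "\<exists>v\<in>{0..D}. gfun (p, f) v = y \<and> v \<le> 2 * y / (p * (1 + sqrt (1 - 1 / ppi)))"
proof -
  define G where "G = gfun (p, f)"
  define k where "k = f w / w"
  have p_pos: "0 < p" using g \<open>0 < m\<close> by (auto simp: in_GPE_def)
  have k_nonneg: "0 \<le> k" using g w by (auto simp: in_GPE_def k_def)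
  \<comment> \<open>by the chord bound, \<open>G\<close> dominates on \<open>[0, w]\<close> the concave quadratic through \<open>(w, G w)\<close>\<close>
  have quad_le: "p * u - k * u\<^sup>2 \<le> G u" if "0 \<le> u" "u \<le> w" for u
  proof (cases "u = 0")
    case True
    then show ?thesis by (simp add: G_def gfun_def)
  next
    case False
    then have "f u \<le> k * u"
      using in_GPE_chord_le[OF g that] w that by (simp add: k_def mult.commute)
    then have "f u * u \<le> k * u * u" using that by (simp add: mult_right_mono)
    then show ?thesis by (simp add: G_def gfun_def power2_eq_square algebra_simps)
  qed
  have Gw: "G w = p * w - k * w\<^sup>2"
    by (cases "w = 0") (simp_all add: G_def gfun_def k_def power2_eq_square algebra_simps)
  have "ppi * (4 * k * y) = 4 * k * (ppi * y)" by simp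
  also have "\<dots> \<le> 4 * k * G w" using assms k_nonneg by (simp add: G_def mult_left_mono)
  also have "\<dots> = p\<^sup>2 - (p - 2 * k * w)\<^sup>2" unfolding Gw by (simp add: power2_eq_square algebra_simps)
  also have "\<dots> \<le> p\<^sup>2" by simp
  finally obtain r where r: "0 \<le> r" "p * r - k * r\<^sup>2 = y"
      "r \<le> 2 * y / (p * (1 + sqrt (1 - 1 / ppi)))"
    using quadratic_level_root[OF p_pos k_nonneg] assms by blast
  have "y \<le> G (min r w)"
  proof (cases "r \<le> w")
    case True
    then show ?thesis using quad_le[of r] r by simp
  next
    case False
    have "y \<le> ppi * y" using assms by (simp add: mult_le_cancel_right1)
    then show ?thesis using False assms by (simp add: G_def)
  qed
  moreover have "continuous_on {0..min r w} G"
    using continuous_on_gfun[OF g] w by (auto simp: G_def intro: continuous_on_subset)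
  moreover have "G 0 \<le> y" using assms by (simp add: G_def gfun_def)
  ultimately obtain v where "0 \<le> v" "v \<le> min r w" "G v = y"
    using IVT'[of G 0 y "min r w"] r w by auto
  then show ?thesis using r w by (intro bexI[of _ v]) (auto simp: G_def)
qed

lemma div_le_div_add_ln:
  fixes a b w D :: real
  assumes "0 < a" "a \<le> b" "0 \<le> w" "w \<le> D * a"
  shows "w / a \<le> w / b + D * ln (b / a)"
proof -
  have "0 \<le> D * a" using assms by linarith
  then have D_nonneg: "0 \<le> D" using assms by (simp add: zero_le_mult_iff)
  have "w / a - w / b = w * (b - a) / (a * b)" using assms by (simp add: field_simps)
  also have "\<dots> \<le> D * a * (b - a) / (a * b)"
    using assms by (intro divide_right_mono mult_right_mono) auto
  also have "\<dots> = D * (1 - a / b)" using assms by (simp add: field_simps)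
  also have "\<dots> \<le> D * ln (b / a)"
    using D_nonneg ln_le_minus_one[of "a / b"] assms by (intro mult_left_mono) (auto simp: ln_div)
  finally show ?thesis by simp
qed

lemma sum_div_le_by_cumulative_bound:
  fixes w p :: "'a \<Rightarrow> real" and D m P :: real
  assumes "finite I" "0 < m" "m \<le> P" "0 \<le> D"
    and "\<And>i. i \<in> I \<Longrightarrow> 0 \<le> w i" and "\<And>i. i \<in> I \<Longrightarrow> m \<le> p i \<and> p i \<le> P"
    and "\<And>c. m \<le> c \<Longrightarrow> (\<Sum>i | i \<in> I \<and> p i \<le> c. w i) \<le> D * c"
  shows "(\<Sum>i\<in>I. w i / p i) \<le> (\<Sum>i\<in>I. w i) / P + D * ln (P / m)"
  using assms(1,3,5-)
proof (induction I arbitrary: P rule: finite_ranking_induct[where f = p])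
  case empty
  then show ?case using assms(2,4) by simp
next
  case (insert x S)
  show ?case
  proof (cases "x \<in> S")
    case True
    then show ?thesis using insert by (simp add: insert_absorb)
  next
    case False
    define W where "W = (\<Sum>i\<in>insert x S. w i)"
    have px: "m \<le> p x" "p x \<le> P" using insert.prems(3) by auto
    have "(\<Sum>i\<in>S. w i / p i) \<le> (\<Sum>i\<in>S. w i) / p x + D * ln (p x / m)"
    proof (rule insert.IH)
      fix c assume "m \<le> c"
      have "(\<Sum>i | i \<in> S \<and> p i \<le> c. w i) \<le> (\<Sum>i | i \<in> insert x S \<and> p i \<le> c. w i)"
        using insert by (intro sum_mono2) auto
      also have "\<dots> \<le> D * c" using insert.prems(4) \<open>m \<le> c\<close> by blast
      finally show "(\<Sum>i | i \<in> S \<and> p i \<le> c. w i) \<le> D * c" .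
    qed (use insert px in auto)
    then have "(\<Sum>i\<in>insert x S. w i / p i) \<le> W / p x + D * ln (p x / m)"
      using insert.hyps(1) False by (simp add: W_def add_divide_distrib)
    also have "\<dots> \<le> W / P + D * ln (P / p x) + D * ln (p x / m)"
    proof -
      have "{i. i \<in> insert x S \<and> p i \<le> p x} = insert x S" using insert.hyps(2) by auto
      then have "W \<le> D * p x" using insert.prems(4)[OF px(1)] by (simp add: W_def)
      moreover have "0 \<le> W" unfolding W_def using insert.prems(2) by (intro sum_nonneg) auto
      ultimately show ?thesis using div_le_div_add_ln[of "p x" P W D] px assms(2) by simp
    qed
    also have "\<dots> = W / P + D * ln (P / m)"
      using px assms(2) by (simp add: ln_div algebra_simps)
    finally show ?thesis by (simp add: W_def)
  qed
qed

lemma exists_mixing_weight: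
  fixes a X Y E D :: real
  assumes "0 \<le> a" "0 \<le> E" "a + X + E \<le> D" "Y \<le> D"
  shows "\<exists>l\<in>{0..1}. a + ((1 - l) * X + l * Y) \<le> D \<and> l * X + (1 - l) * Y + E \<le> D"
proof (cases "Y \<le> X")
  case True
  then show ?thesis using assms by (intro bexI[of _ 0]) auto
next
  case False
  define l where "l = max 0 ((Y + E - D) / (Y - X))"
  have "Y + E - D \<le> l * (Y - X)" "l * (Y - X) \<le> max 0 (Y + E - D)"
    using False by (auto simp: l_def divide_le_eq max_def zero_le_divide_iff)
  moreover have "l \<le> 1" using False assms by (auto simp: l_def divide_le_eq)
  ultimately show ?thesis using assms
    by (intro bexI[of _ l]) (auto simp: l_def algebra_simps max_def split: if_splits)
qed

locale gpe_sequence =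
  fixes D m M :: real and \<sigma> :: "(real \<times> (real \<Rightarrow> real)) list"
  assumes D_pos: "0 < D" and m_pos: "0 < m" and m_le_M: "m \<le> M"
    and in_GPE_set: "\<forall>(p, f) \<in> set \<sigma>. in_GPE D m M p f"
begin

abbreviation "T \<equiv> length \<sigma>"

lemma in_GPE_nth: "s < T \<Longrightarrow> in_GPE D m M (fst (\<sigma> ! s)) (snd (\<sigma> ! s))"
  using in_GPE_set nth_mem[of s \<sigma>] by (cases "\<sigma> ! s") auto

definition feasible :: "nat set \<Rightarrow> (nat \<Rightarrow> real) \<Rightarrow> bool" where
  "feasible I x \<longleftrightarrow> (\<forall>s\<in>I. 0 \<le> x s) \<and> (\<Sum>s\<in>I. x s) \<le> D"

definition revenue :: "nat set \<Rightarrow> (nat \<Rightarrow> real) \<Rightarrow> real" where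
  "revenue I x = (\<Sum>s\<in>I. gfun (\<sigma> ! s) (x s))"

definition opt :: "nat set \<Rightarrow> real" where
  "opt I = Sup {revenue I x | x. feasible I x}"

lemma feasible_bound: "finite I \<Longrightarrow> feasible I x \<Longrightarrow> s \<in> I \<Longrightarrow> x s \<in> {0..D}"
  unfolding feasible_def using member_le_sum[of s I x] by auto

lemma feasible_zero: "feasible I (\<lambda>_. 0)"
  using D_pos by (simp add: feasible_def)

lemma revenue_le_price_bound:
  assumes "I \<subseteq> {..<T}" "feasible I x" "\<forall>s\<in>I. fst (\<sigma> ! s) \<le> c" "0 \<le> c"
  shows "revenue I x \<le> c * D"
proof -
  have fin: "finite I" using assms(1) finite_subset by blast
  have "revenue I x \<le> (\<Sum>s\<in>I. c * x s)"
    unfolding revenue_def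
  proof (rule sum_mono)
    fix s assume s: "s \<in> I"
    then have x_s: "x s \<in> {0..D}" using feasible_bound[OF fin assms(2)] by blast
    have "gfun (\<sigma> ! s) (x s) \<le> fst (\<sigma> ! s) * x s"
      using gfun_le_price[OF in_GPE_nth x_s] s assms(1) by auto
    also have "\<dots> \<le> c * x s" using assms(3) s x_s by (simp add: mult_right_mono)
    finally show "gfun (\<sigma> ! s) (x s) \<le> c * x s" .
  qed
  also have "\<dots> \<le> c * D"
    using assms(2,4) by (simp add: feasible_def sum_distrib_left[symmetric] mult_left_mono)
  finally show ?thesis .
qed

lemma bdd_above_revenue: "I \<subseteq> {..<T} \<Longrightarrow> bdd_above {revenue I x | x. feasible I x}"
  using revenue_le_price_bound[of I _ M] in_GPE_nth m_pos m_le_M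
  by (intro bdd_aboveI[of _ "M * D"]) (auto simp: in_GPE_def)

lemma opt_upper: "I \<subseteq> {..<T} \<Longrightarrow> feasible I x \<Longrightarrow> revenue I x \<le> opt I"
  unfolding opt_def by (rule cSup_upper[OF _ bdd_above_revenue]) auto

lemma opt_least: "(\<And>x. feasible I x \<Longrightarrow> revenue I x \<le> B) \<Longrightarrow> opt I \<le> B"
  unfolding opt_def by (rule cSup_least) (use feasible_zero in auto)

lemma opt_empty: "opt {} = 0"
proof -
  have "opt {} \<le> 0" by (rule opt_least) (simp add: revenue_def)
  moreover have "revenue {} (\<lambda>_. 0) \<le> opt {}" by (rule opt_upper) (simp_all add: feasible_zero)
  ultimately show ?thesis by (simp add: revenue_def)
qed

lemma opt_le_price_bound:
  "I \<subseteq> {..<T} \<Longrightarrow> \<forall>s\<in>I. fst (\<sigma> ! s) \<le> c \<Longrightarrow> 0 \<le> c \<Longrightarrow> opt I \<le> c * D"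
  by (rule opt_least) (rule revenue_le_price_bound)

lemma opt_mono:
  assumes "A \<subseteq> B" "B \<subseteq> {..<T}"
  shows "opt A \<le> opt B"
proof (rule opt_least)
  fix x assume x: "feasible A x"
  have fin: "finite B" using assms(2) finite_subset by blast
  define x' where "x' s = (if s \<in> A then x s else 0)" for s
  have "(\<Sum>s\<in>B. x' s) = (\<Sum>s\<in>A. x s)"
    using sum.mono_neutral_right[OF fin assms(1), of x'] by (simp add: x'_def)
  then have "feasible B x'" using x by (auto simp: feasible_def x'_def)
  moreover have "revenue B x' = revenue A x"
    using sum.mono_neutral_right[OF fin assms(1), of "\<lambda>s. gfun (\<sigma> ! s) (x' s)"]
    by (simp add: revenue_def x'_def gfun_def)
  ultimately show "revenue A x \<le> opt B" using opt_upper[OF assms(2)] by metis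
qed

lemma revenue_mix_ge:
  assumes "A \<subseteq> {..<T}" "\<forall>s\<in>A. x s \<in> {0..D}" "\<forall>s\<in>A. y s \<in> {0..D}" "0 \<le> l" "l \<le> 1"
  shows "revenue A x + revenue A y
    \<le> revenue A (\<lambda>s. (1 - l) * x s + l * y s) + revenue A (\<lambda>s. l * x s + (1 - l) * y s)"
  unfolding revenue_def sum.distrib[symmetric]
proof (rule sum_mono)
  fix s assume "s \<in> A"
  then show "gfun (\<sigma> ! s) (x s) + gfun (\<sigma> ! s) (y s)
    \<le> gfun (\<sigma> ! s) ((1 - l) * x s + l * y s) + gfun (\<sigma> ! s) (l * x s + (1 - l) * y s)"
    using gfun_mix_sum_le[OF in_GPE_nth, of s "x s" "y s" l] assms by auto
qed

text \<open>On \<open>A\<close>, \<open>x\<close> and \<open>y\<close> are replaced by two complementary convex combinations, with the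
  weight chosen to keep both new allocations within the budget; \<open>x t\<close> goes with \<open>insert t A\<close>
  and \<open>x\<close> on \<open>B - A\<close> stays with \<open>B\<close>.\<close>
lemma revenue_exchange:
  assumes A: "A \<subseteq> B" and B: "B \<subseteq> {..<T}" and t: "t < T" "t \<notin> B"
    and x: "feasible (insert t B) x" and y: "feasible A y"
  shows "revenue (insert t B) x + revenue A y \<le> opt (insert t A) + opt B"
proof -
  have finB: "finite B" using B finite_subset by blast
  have finA: "finite A" using A finB finite_subset by blast
  have tA: "t \<notin> A" using A t by auto
  have x_bd: "x s \<in> {0..D}" if "s \<in> insert t B" for s using feasible_bound[OF _ x that] finB by auto
  have y_bd: "y s \<in> {0..D}" if "s \<in> A" for s using feasible_bound[OF finA y that] .
  define X where "X = (\<Sum>s\<in>A. x s)"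
  define E where "E = (\<Sum>s\<in>B - A. x s)"
  have "(\<Sum>s\<in>insert t B. x s) = x t + X + E"
    using sum.subset_diff[OF A finB, of x] finB t by (simp add: X_def E_def)
  then have "x t + X + E \<le> D" using x by (simp add: feasible_def)
  moreover have "0 \<le> E" unfolding E_def using x_bd by (intro sum_nonneg) auto
  moreover have "(\<Sum>s\<in>A. y s) \<le> D" using y by (simp add: feasible_def)
  ultimately obtain l where l: "0 \<le> l" "l \<le> 1"
      "x t + ((1 - l) * X + l * (\<Sum>s\<in>A. y s)) \<le> D" "l * X + (1 - l) * (\<Sum>s\<in>A. y s) + E \<le> D"
    using exists_mixing_weight[of "x t" E X D "\<Sum>s\<in>A. y s"] x_bd[of t] by auto
  define a1 where "a1 s = (1 - l) * x s + l * y s" for s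
  define a2 where "a2 s = l * x s + (1 - l) * y s" for s
  define z1 where "z1 s = (if s = t then x t else a1 s)" for s
  define z2 where "z2 s = (if s \<in> A then a2 s else x s)" for s
  have z1_A: "z1 s = a1 s" if "s \<in> A" for s using that tA by (auto simp: z1_def)
  have a_nonneg: "0 \<le> a1 s" "0 \<le> a2 s" if "s \<in> A" for s
    using x_bd[of s] y_bd[OF that] that A l by (auto simp: a1_def a2_def)
  have "feasible (insert t A) z1"
  proof -
    have "(\<Sum>s\<in>insert t A. z1 s) = x t + (\<Sum>s\<in>A. a1 s)"
      using finA tA sum.cong[OF refl z1_A] by (simp add: z1_def)
    also have "\<dots> \<le> D" using l by (simp add: a1_def sum.distrib sum_distrib_left X_def)
    finally show ?thesis using a_nonneg x_bd[of t] tA by (auto simp: feasible_def z1_def)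
  qed
  moreover have "feasible B z2"
  proof -
    have "(\<Sum>s\<in>B. z2 s) = E + (\<Sum>s\<in>A. a2 s)"
      using sum.subset_diff[OF A finB, of z2] by (simp add: z2_def E_def)
    also have "\<dots> \<le> D" using l by (simp add: a2_def sum.distrib sum_distrib_left X_def)
    finally show ?thesis using a_nonneg x_bd by (auto simp: feasible_def z2_def)
  qed
  moreover have "revenue (insert t B) x + revenue A y \<le> revenue (insert t A) z1 + revenue B z2"
  proof -
    have "revenue (insert t B) x = gfun (\<sigma> ! t) (x t) + revenue (B - A) x + revenue A x"
      using sum.subset_diff[OF A finB] finB t by (simp add: revenue_def)
    moreover have "revenue (insert t A) z1 = gfun (\<sigma> ! t) (x t) + revenue A a1"
      using finA tA sum.cong[OF refl, of A "\<lambda>s. gfun (\<sigma> ! s) (z1 s)"] z1_A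
      by (simp add: revenue_def z1_def)
    moreover have "revenue B z2 = revenue (B - A) x + revenue A a2"
    proof -
      have "revenue B z2 = revenue (B - A) z2 + revenue A z2"
        using sum.subset_diff[OF A finB] by (simp add: revenue_def)
      also have "\<dots> = revenue (B - A) x + revenue A a2"
        unfolding revenue_def by (intro arg_cong2[where f = "(+)"] sum.cong) (auto simp: z2_def)
      finally show ?thesis .
    qed
    moreover have "revenue A x + revenue A y \<le> revenue A a1 + revenue A a2"
      unfolding a1_def a2_def using A B x_bd y_bd l by (intro revenue_mix_ge) auto
    ultimately show ?thesis by simp
  qed
  ultimately show ?thesis
    using opt_upper[of "insert t A" z1] opt_upper[OF B, of z2] A B t by fastforce
qed

lemma opt_submodular:
  assumes "A \<subseteq> B" "B \<subseteq> {..<T}" "t < T" "t \<notin> B"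
  shows "opt (insert t B) + opt A \<le> opt (insert t A) + opt B"
proof -
  have "opt (insert t B) \<le> opt (insert t A) + opt B - opt A"
  proof (rule opt_least)
    fix x assume x: "feasible (insert t B) x"
    have "opt A \<le> opt (insert t A) + opt B - revenue (insert t B) x"
    proof (rule opt_least)
      fix y assume "feasible A y"
      from revenue_exchange[OF assms x this]
      show "revenue A y \<le> opt (insert t A) + opt B - revenue (insert t B) x" by simp
    qed
    then show "revenue (insert t B) x \<le> opt (insert t A) + opt B - opt A" by simp
  qed
  then show ?thesis by simp
qed

\<comment> \<open>steps are 0-based: \<open>marginal s\<close> is the increment of \<open>\<eta>\<^sub>O\<^sub>P\<^sub>T\<close> at time \<open>s + 1\<close>\<close>
definition marginal :: "nat \<Rightarrow> real" where
  "marginal s = opt {..<Suc s} - opt {..<s}"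

lemma marginal_nonneg: "s < T \<Longrightarrow> 0 \<le> marginal s"
  unfolding marginal_def using opt_mono[of "{..<s}" "{..<Suc s}"] by auto

lemma sum_marginal_le_opt:
  "n \<le> T \<Longrightarrow> (\<Sum>s | s < n \<and> P s. marginal s) \<le> opt {s. s < n \<and> P s}"
proof (induction n)
  case 0
  then show ?case using opt_empty by simp
next
  case (Suc n)
  define A where "A = {s. s < n \<and> P s}"
  have IH: "(\<Sum>s\<in>A. marginal s) \<le> opt A" using Suc by (simp add: A_def)
  show ?case
  proof (cases "P n")
    case True
    have "opt (insert n {..<n}) + opt A \<le> opt (insert n A) + opt {..<n}"
      using Suc.prems by (intro opt_submodular) (auto simp: A_def)
    moreover have "insert n {..<n} = {..<Suc n}" by auto
    ultimately have "marginal n \<le> opt (insert n A) - opt A" by (simp add: marginal_def)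
    moreover have "{s. s < Suc n \<and> P s} = insert n A" using True by (auto simp: A_def)
    ultimately show ?thesis using IH by (simp add: A_def)
  next
    case False
    then have "{s. s < Suc n \<and> P s} = A" by (auto simp: A_def less_Suc_eq)
    then show ?thesis using IH by simp
  qed
qed

lemma marginal_le_gfun: "s < T \<Longrightarrow> \<exists>w\<in>{0..D}. marginal s \<le> gfun (\<sigma> ! s) w"
proof -
  assume s: "s < T"
  obtain w where w: "w \<in> {0..D}" "\<forall>v\<in>{0..D}. gfun (\<sigma> ! s) v \<le> gfun (\<sigma> ! s) w"
    using continuous_attains_sup[of "{0..D}" "gfun (\<sigma> ! s)"] continuous_on_gfun[OF in_GPE_nth[OF s]]
      D_pos by auto
  have "{i. i < Suc s \<and> i = s} = {s}" by auto
  then have "marginal s \<le> opt {s}" using sum_marginal_le_opt[of "Suc s" "\<lambda>i. i = s"] s by simp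
  also have "\<dots> \<le> gfun (\<sigma> ! s) w"
    using feasible_bound[of "{s}"] w by (intro opt_least) (auto simp: revenue_def)
  finally show ?thesis using w by blast
qed

lemma sum_marginal_le_price_bound:
  assumes "0 \<le> c"
  shows "(\<Sum>s | s < T \<and> fst (\<sigma> ! s) \<le> c. marginal s) \<le> c * D"
proof -
  have "(\<Sum>s | s < T \<and> fst (\<sigma> ! s) \<le> c. marginal s) \<le> opt {s. s < T \<and> fst (\<sigma> ! s) \<le> c}"
    by (rule sum_marginal_le_opt) simp
  also have "\<dots> \<le> c * D" using assms by (intro opt_le_price_bound) auto
  finally show ?thesis .
qed

lemma etaOPT_take:
  assumes "k \<le> T"
  shows "etaOPT D (take k \<sigma>) = opt {..<k}"
proof -
  have "{(\<Sum>s<length (take k \<sigma>). gfun (take k \<sigma> ! s) (x s)) | x.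
      (\<forall>s<length (take k \<sigma>). 0 \<le> x s) \<and> (\<Sum>s<length (take k \<sigma>). x s) \<le> D}
    = {revenue {..<k} x | x. feasible {..<k} x}"
    using assms by (simp add: revenue_def feasible_def min_def Ball_def)
  then show ?thesis by (simp add: etaOPT_def opt_def)
qed

lemma crp_out_le:
  assumes s: "s < T" and "1 \<le> ppi"
  shows "crp_out D ppi \<sigma> (Suc s)
    \<le> 2 * (marginal s / ppi) / (fst (\<sigma> ! s) * (1 + sqrt (1 - 1 / ppi)))"
proof -
  obtain w where w: "w \<in> {0..D}" "marginal s \<le> gfun (\<sigma> ! s) w" using marginal_le_gfun[OF s] by blast
  obtain v where v: "v \<in> {0..D}" "gfun (\<sigma> ! s) v = marginal s / ppi"
      "v \<le> 2 * (marginal s / ppi) / (fst (\<sigma> ! s) * (1 + sqrt (1 - 1 / ppi)))"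
    using gfun_level_point_le[OF in_GPE_nth[OF s] m_pos w(1), of "marginal s / ppi" ppi]
      w(2) marginal_nonneg[OF s] assms by auto
  have "crp_out D ppi \<sigma> (Suc s) = Inf {u \<in> {0..D}. gfun (\<sigma> ! s) u = marginal s / ppi}"
    using s by (simp add: crp_out_def etaOPT_take marginal_def)
  also have "\<dots> \<le> v" using v by (intro cInf_lower) auto
  finally show ?thesis using v(3) by simp
qed

lemma sum_crp_out_le:
  assumes "1 \<le> ppi"
  shows "(\<Sum>t=1..T. crp_out D ppi \<sigma> t)
    \<le> 2 * D / (ppi * (1 + sqrt (1 - 1 / ppi))) * (ln (M / m) + 1)"
proof -
  define k where "k = 2 / (ppi * (1 + sqrt (1 - 1 / ppi)))"
  have k_nonneg: "0 \<le> k" using assms by (simp add: k_def)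
  have price: "m \<le> fst (\<sigma> ! s) \<and> fst (\<sigma> ! s) \<le> M" if "s < T" for s
    using in_GPE_nth[OF that] by (simp add: in_GPE_def)
  have "(\<Sum>t=1..T. crp_out D ppi \<sigma> t) = (\<Sum>s<T. crp_out D ppi \<sigma> (Suc s))"
    by (simp add: sum.atLeast1_atMost_eq)
  also have "\<dots> \<le> (\<Sum>s<T. k * (marginal s / fst (\<sigma> ! s)))"
    using crp_out_le assms by (intro sum_mono) (simp add: k_def field_simps)
  also have "\<dots> = k * (\<Sum>s<T. marginal s / fst (\<sigma> ! s))" by (simp add: sum_distrib_left)
  also have "\<dots> \<le> k * ((\<Sum>s<T. marginal s) / M + D * ln (M / m))"
  proof (intro mult_left_mono k_nonneg sum_div_le_by_cumulative_bound)
    fix c assume "m \<le> c"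
    then show "(\<Sum>s | s \<in> {..<T} \<and> fst (\<sigma> ! s) \<le> c. marginal s) \<le> D * c"
      using sum_marginal_le_price_bound[of c] m_pos by (simp add: mult.commute)
  qed (use m_pos m_le_M D_pos marginal_nonneg price in auto)
  also have "\<dots> \<le> k * (D + D * ln (M / m))"
  proof -
    have "(\<Sum>s<T. marginal s) = (\<Sum>s | s < T \<and> fst (\<sigma> ! s) \<le> M. marginal s)"
      using price by (intro sum.cong) auto
    also have "\<dots> \<le> M * D" using sum_marginal_le_price_bound m_pos m_le_M by simp
    finally show ?thesis
      using k_nonneg m_pos m_le_M by (intro mult_left_mono) (simp_all add: divide_le_eq mult.commute)
  qed
  also have "\<dots> = 2 * D / (ppi * (1 + sqrt (1 - 1 / ppi))) * (ln (M / m) + 1)"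
    by (simp add: k_def algebra_simps)
  finally show ?thesis .
qed

end

theorem lemma15:
  fixes Delta m M ppi :: real
  assumes "0 < Delta" and "0 < m" and "m \<le> M" and "1 \<le> ppi"
  shows "Phi Delta m M ppi \<le>
    ereal (2 * Delta / (ppi * (1 + sqrt (1 - 1 / ppi))) * (ln (M / m) + 1))"
  unfolding Phi_def
proof (rule SUP_least)
  fix \<sigma> assume "\<sigma> \<in> {\<sigma>. \<sigma> \<noteq> [] \<and> (\<forall>(p, f) \<in> set \<sigma>. in_GPE Delta m M p f)}"
  then interpret gpe_sequence Delta m M \<sigma> using assms by unfold_locales auto
  show "ereal (\<Sum>t=1..length \<sigma>. crp_out Delta ppi \<sigma> t)
      \<le> ereal (2 * Delta / (ppi * (1 + sqrt (1 - 1 / ppi))) * (ln (M / m) + 1))"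
    using sum_crp_out_le[OF assms(4)] by simp
qed

end
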